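(* Let $\Bbbk$ be a commutative ring of global dimension zero, $C$ a $\Bbbk$-coalgebra and $M$ a right $C$-comodule finitely generated as a $\Bbbk$-module, with dual $M^*=\mathrm{Hom}_\Bbbk(M,\Bbbk)$. For every $C$-colinear $f\colon M\to M$, the colinear Hattori--Stallings trace $\mathrm{tr}^C(f)$ equals the image of $1\in\Bbbk$ under the composite \[\Bbbk\xrightarrow{\eta}M\square_CM^*\xrightarrow{f\square1}M\square_CM^*\cong\mathrm{coHH}_0(M^*\otimes M,C)\xrightarrow{\langle\epsilon\rangle}\mathrm{coHH}_0(C).\]
   Context: $M^*$ is a left $C$-comodule via $\alpha\mapsto(\alpha\otimes\mathrm{id}_C)\circ\rho\in\mathrm{Hom}_\Bbbk(M,C)\cong C\otimes M^*$. $\eta(1)=\sum_ie_i\otimes e_i^*$ for a basis $(e_i)$ and dual basis $(e_i^* )$ (corresponding to $\mathrm{id}_M$). The isomorphism $M\square_CM^*\cong\mathrm{coHH}_0(M^*\otimes M,C)$ is the swap $m\otimes\alpha\mapsto\alpha\otimes m$, where $\mathrm{coHH}_0(P,C)=\ker(\rho-\tilde t\lambda\colon P\to P\otimes C)$ for a $(C,C)$-bicomodule $P$. $\epsilon\colon M^*\otimes M\to C$ is the $C$-bicolinear map $\alpha\otimes m\mapsto\sum\alpha(m_{(0)})m_{(1)}$ and $\langle\epsilon\rangle$ its restriction. $\mathrm{tr}^C(f)=\sum_i\sum e_i^*(f(e_{i(0)}))e_{i(1)}\in\mathrm{coHH}_0(C)=\ker(\Delta-\tau\Delta)$. *)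

theory Defs
  imports Complex_Main "HOL-Library.Function_Algebras"
begin

definition k_ideal :: "'k::comm_ring_1 set \<Rightarrow> bool" where
  "k_ideal I \<longleftrightarrow> 0 \<in> I \<and> (\<forall>x\<in>I. \<forall>y\<in>I. x + y \<in> I) \<and> (\<forall>a. \<forall>x\<in>I. a * x \<in> I)"

text \<open>Global dimension zero (= semisimple ring): every ideal is a direct summand of the
  regular module.\<close>
definition global_dim_zero :: "'k::comm_ring_1 itself \<Rightarrow> bool" where
  "global_dim_zero _ \<longleftrightarrow>
     (\<forall>I::'k set. k_ideal I \<longrightarrow>
        (\<exists>J. k_ideal J \<and> I \<inter> J = {0} \<and> (\<forall>x. \<exists>a\<in>I. \<exists>b\<in>J. x = a + b)))"

text \<open>An element of a tensor product of k-modules is represented by a finitely supported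
  function u on pairs (formal sum of u(m,n) (m\<otimes>n)); two representatives are equal in the
  tensor product iff their difference lies in the span of the multilinearity relations.\<close>

definition fscale :: "'k::comm_ring_1 \<Rightarrow> ('a \<Rightarrow> 'k) \<Rightarrow> ('a \<Rightarrow> 'k)" where
  "fscale c u = (\<lambda>x. c * u x)"

definition delta :: "'a \<Rightarrow> 'a \<Rightarrow> 'k::comm_ring_1" where
  "delta a = (\<lambda>x. if x = a then 1 else 0)"

definition fin_supp :: "('a \<Rightarrow> 'k::zero) \<Rightarrow> bool" where
  "fin_supp u \<longleftrightarrow> finite {x. u x \<noteq> 0}"

definition rsum :: "('k::comm_ring_1 \<Rightarrow> 'b \<Rightarrow> 'b) \<Rightarrow> ('a \<Rightarrow> 'k) \<Rightarrow> ('a \<Rightarrow> 'b) \<Rightarrow> 'b::comm_monoid_add" where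
  "rsum s u g = (\<Sum>x\<in>{x. u x \<noteq> 0}. s (u x) (g x))"

definition tens_gen ::
  "('k::comm_ring_1 \<Rightarrow> 'm::ab_group_add \<Rightarrow> 'm) \<Rightarrow> ('k \<Rightarrow> 'n::ab_group_add \<Rightarrow> 'n) \<Rightarrow> ('m \<times> 'n \<Rightarrow> 'k) set" where
  "tens_gen s1 s2 =
     {delta (m + m', n) - delta (m, n) - delta (m', n) | m m' n. True} \<union>
     {delta (m, n + n') - delta (m, n) - delta (m, n') | m n n'. True} \<union>
     {delta (s1 a m, n) - fscale a (delta (m, n)) | a m n. True} \<union>
     {delta (m, s2 a n) - fscale a (delta (m, n)) | a m n. True}"

definition tens_eq ::
  "('k::comm_ring_1 \<Rightarrow> 'm::ab_group_add \<Rightarrow> 'm) \<Rightarrow> ('k \<Rightarrow> 'n::ab_group_add \<Rightarrow> 'n) \<Rightarrow>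
   ('m \<times> 'n \<Rightarrow> 'k) \<Rightarrow> ('m \<times> 'n \<Rightarrow> 'k) \<Rightarrow> bool" where
  "tens_eq s1 s2 u v \<longleftrightarrow> u - v \<in> module.span fscale (tens_gen s1 s2)"

definition tens3_gen ::
  "('k::comm_ring_1 \<Rightarrow> 'm::ab_group_add \<Rightarrow> 'm) \<Rightarrow> ('k \<Rightarrow> 'n::ab_group_add \<Rightarrow> 'n) \<Rightarrow>
   ('k \<Rightarrow> 'p::ab_group_add \<Rightarrow> 'p) \<Rightarrow> ('m \<times> 'n \<times> 'p \<Rightarrow> 'k) set" where
  "tens3_gen s1 s2 s3 =
     {delta (m + m', n, p) - delta (m, n, p) - delta (m', n, p) | m m' n p. True} \<union>
     {delta (m, n + n', p) - delta (m, n, p) - delta (m, n', p) | m n n' p. True} \<union>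
     {delta (m, n, p + p') - delta (m, n, p) - delta (m, n, p') | m n p p'. True} \<union>
     {delta (s1 a m, n, p) - fscale a (delta (m, n, p)) | a m n p. True} \<union>
     {delta (m, s2 a n, p) - fscale a (delta (m, n, p)) | a m n p. True} \<union>
     {delta (m, n, s3 a p) - fscale a (delta (m, n, p)) | a m n p. True}"

definition tens3_eq ::
  "('k::comm_ring_1 \<Rightarrow> 'm::ab_group_add \<Rightarrow> 'm) \<Rightarrow> ('k \<Rightarrow> 'n::ab_group_add \<Rightarrow> 'n) \<Rightarrow>
   ('k \<Rightarrow> 'p::ab_group_add \<Rightarrow> 'p) \<Rightarrow> ('m \<times> 'n \<times> 'p \<Rightarrow> 'k) \<Rightarrow> ('m \<times> 'n \<times> 'p \<Rightarrow> 'k) \<Rightarrow> bool" where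
  "tens3_eq s1 s2 s3 u v \<longleftrightarrow> u - v \<in> module.span fscale (tens3_gen s1 s2 s3)"

definition tmap :: "('m \<Rightarrow> 'm') \<Rightarrow> ('n \<Rightarrow> 'n') \<Rightarrow> ('m \<times> 'n \<Rightarrow> 'k::comm_ring_1) \<Rightarrow> ('m' \<times> 'n' \<Rightarrow> 'k)" where
  "tmap g h u = rsum fscale u (\<lambda>(x, y). delta (g x, h y))"

text \<open>(\<phi> \<otimes> id) and (id \<otimes> \<psi>) for maps \<phi> : M \<rightarrow> M \<otimes> N, \<psi> : N \<rightarrow> N \<otimes> P.\<close>
definition tmap_left :: "('m \<Rightarrow> ('a \<times> 'b \<Rightarrow> 'k::comm_ring_1)) \<Rightarrow> ('m \<times> 'c \<Rightarrow> 'k) \<Rightarrow> ('a \<times> 'b \<times> 'c \<Rightarrow> 'k)" where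
  "tmap_left \<phi> u = rsum fscale u (\<lambda>(x, y). rsum fscale (\<phi> x) (\<lambda>(a, b). delta (a, b, y)))"

definition tmap_right :: "('n \<Rightarrow> ('b \<times> 'c \<Rightarrow> 'k::comm_ring_1)) \<Rightarrow> ('a \<times> 'n \<Rightarrow> 'k) \<Rightarrow> ('a \<times> 'b \<times> 'c \<Rightarrow> 'k)" where
  "tmap_right \<psi> u = rsum fscale u (\<lambda>(x, y). rsum fscale (\<psi> y) (\<lambda>(a, b). delta (x, a, b)))"

definition coalgebra ::
  "('k::comm_ring_1 \<Rightarrow> 'c::ab_group_add \<Rightarrow> 'c) \<Rightarrow> ('c \<Rightarrow> ('c \<times> 'c \<Rightarrow> 'k)) \<Rightarrow> ('c \<Rightarrow> 'k) \<Rightarrow> bool" where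
  "coalgebra sC \<Delta> \<epsilon> \<longleftrightarrow>
     module sC \<and> module_hom sC (*) \<epsilon> \<and>
     (\<forall>c. fin_supp (\<Delta> c)) \<and>
     (\<forall>a x y. tens_eq sC sC (\<Delta> (sC a x + y)) (fscale a (\<Delta> x) + \<Delta> y)) \<and>
     (\<forall>c. tens3_eq sC sC sC (tmap_left \<Delta> (\<Delta> c)) (tmap_right \<Delta> (\<Delta> c))) \<and>
     (\<forall>c. rsum sC (\<Delta> c) (\<lambda>(x, y). sC (\<epsilon> x) y) = c) \<and>
     (\<forall>c. rsum sC (\<Delta> c) (\<lambda>(x, y). sC (\<epsilon> y) x) = c)"

definition right_comodule ::
  "('k::comm_ring_1 \<Rightarrow> 'c::ab_group_add \<Rightarrow> 'c) \<Rightarrow> ('c \<Rightarrow> ('c \<times> 'c \<Rightarrow> 'k)) \<Rightarrow> ('c \<Rightarrow> 'k) \<Rightarrow>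
   ('k \<Rightarrow> 'm::ab_group_add \<Rightarrow> 'm) \<Rightarrow> ('m \<Rightarrow> ('m \<times> 'c \<Rightarrow> 'k)) \<Rightarrow> bool" where
  "right_comodule sC \<Delta> \<epsilon> sM \<rho> \<longleftrightarrow>
     module sM \<and>
     (\<forall>m. fin_supp (\<rho> m)) \<and>
     (\<forall>a x y. tens_eq sM sC (\<rho> (sM a x + y)) (fscale a (\<rho> x) + \<rho> y)) \<and>
     (\<forall>m. tens3_eq sM sC sC (tmap_left \<rho> (\<rho> m)) (tmap_right \<Delta> (\<rho> m))) \<and>
     (\<forall>m. rsum sM (\<rho> m) (\<lambda>(x, c). sM (\<epsilon> c) x) = m)"

definition colinear ::
  "('k::comm_ring_1 \<Rightarrow> 'c::ab_group_add \<Rightarrow> 'c) \<Rightarrow> ('k \<Rightarrow> 'm::ab_group_add \<Rightarrow> 'm) \<Rightarrow>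
   ('m \<Rightarrow> ('m \<times> 'c \<Rightarrow> 'k)) \<Rightarrow> ('m \<Rightarrow> 'm) \<Rightarrow> bool" where
  "colinear sC sM \<rho> f \<longleftrightarrow> module_hom sM sM f \<and> (\<forall>m. tens_eq sM sC (\<rho> (f m)) (tmap f id (\<rho> m)))"

definition fin_gen :: "('k::comm_ring_1 \<Rightarrow> 'm::ab_group_add \<Rightarrow> 'm) \<Rightarrow> bool" where
  "fin_gen sM \<longleftrightarrow> (\<exists>G. finite G \<and> module.span sM G = UNIV)"

definition dual_basis ::
  "('k::comm_ring_1 \<Rightarrow> 'm::ab_group_add \<Rightarrow> 'm) \<Rightarrow> 'i set \<Rightarrow> ('i \<Rightarrow> 'm) \<Rightarrow> ('i \<Rightarrow> ('m \<Rightarrow> 'k)) \<Rightarrow> bool" where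
  "dual_basis sM I e es \<longleftrightarrow> finite I \<and> (\<forall>i\<in>I. module_hom sM (*) (es i)) \<and>
     (\<forall>m. m = (\<Sum>i\<in>I. sM (es i m) (e i)))"

definition trC ::
  "('k::comm_ring_1 \<Rightarrow> 'c::ab_group_add \<Rightarrow> 'c) \<Rightarrow> ('m \<Rightarrow> ('m \<times> 'c \<Rightarrow> 'k)) \<Rightarrow>
   'i set \<Rightarrow> ('i \<Rightarrow> 'm) \<Rightarrow> ('i \<Rightarrow> ('m \<Rightarrow> 'k)) \<Rightarrow> ('m \<Rightarrow> 'm) \<Rightarrow> 'c" where
  "trC sC \<rho> I e es f = (\<Sum>i\<in>I. rsum sC (\<rho> (e i)) (\<lambda>(x, c). sC (es i (f x)) c))"

text \<open>\<eta> : k \<rightarrow> M \<box>_C M^*, a \<mapsto> a \<Sum>_i e_i \<otimes> e_i^* (representative in M \<otimes> M^*).\<close>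
definition eta :: "'i set \<Rightarrow> ('i \<Rightarrow> 'm) \<Rightarrow> ('i \<Rightarrow> ('m \<Rightarrow> 'k)) \<Rightarrow> 'k \<Rightarrow> ('m \<times> ('m \<Rightarrow> 'k) \<Rightarrow> 'k::comm_ring_1)" where
  "eta I e es a = fscale a (\<Sum>i\<in>I. delta (e i, es i))"

text \<open>Swap isomorphism M \<box>_C M^* \<cong> coHH_0(M^* \<otimes> M, C), m \<otimes> \<alpha> \<mapsto> \<alpha> \<otimes> m.\<close>
definition tswap :: "('a \<times> 'b \<Rightarrow> 'k) \<Rightarrow> ('b \<times> 'a \<Rightarrow> 'k)" where
  "tswap u = (\<lambda>(b, a). u (a, b))"

text \<open>\<epsilon> : M^* \<otimes> M \<rightarrow> C, \<alpha> \<otimes> m \<mapsto> \<Sum> \<alpha>(m_(0)) m_(1); \<langle>\<epsilon>\<rangle> is its restriction to coHH_0.\<close>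
definition eps_ev ::
  "('k::comm_ring_1 \<Rightarrow> 'c::ab_group_add \<Rightarrow> 'c) \<Rightarrow> ('m \<Rightarrow> ('m \<times> 'c \<Rightarrow> 'k)) \<Rightarrow> (('m \<Rightarrow> 'k) \<times> 'm \<Rightarrow> 'k) \<Rightarrow> 'c" where
  "eps_ev sC \<rho> v = rsum sC v (\<lambda>(\<alpha>, m). rsum sC (\<rho> m) (\<lambda>(x, c). sC (\<alpha> x) c))"

end

theory Submission
  imports Defs
begin

text \<open>Since \<open>\<eta>(1) = \<Sum>\<^sub>i e\<^sub>i \<otimes> e\<^sub>i\<^sup>*\<close>, the composite sends \<open>1\<close> to
  \<open>\<Sum>\<^sub>i (e\<^sub>i\<^sup>* \<otimes> id\<^sub>C) (\<rho> (f e\<^sub>i))\<close>. Colinearity \<open>\<rho> \<circ> f = (f \<otimes> id\<^sub>C) \<circ> \<rho>\<close> rewrites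
  each summand as \<open>(e\<^sub>i\<^sup>* \<circ> f \<otimes> id\<^sub>C) (\<rho> e\<^sub>i)\<close>, and the sum of these is \<open>tr\<^sup>C(f)\<close>.
  Colinearity only holds modulo the defining relations of \<open>M \<otimes> C\<close>; these are killed by
  \<open>\<alpha> \<otimes> id\<^sub>C\<close> for every linear \<open>\<alpha>\<close>, by the universal property of the tensor product.\<close>

lemma module_fscale: "module (fscale :: 'k::comm_ring_1 \<Rightarrow> ('a \<Rightarrow> 'k) \<Rightarrow> ('a \<Rightarrow> 'k))"
  by unfold_locales (auto simp: fscale_def fun_eq_iff algebra_simps)

lemma fin_supp_zero: "fin_supp 0"
  unfolding fin_supp_def by simp

lemma fin_supp_add: "fin_supp (u::'a \<Rightarrow> 'k::comm_ring_1) \<Longrightarrow> fin_supp v \<Longrightarrow> fin_supp (u + v)"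
  unfolding fin_supp_def
  by (rule finite_subset[of _ "{x. u x \<noteq> 0} \<union> {x. v x \<noteq> 0}"]) auto

lemma fin_supp_diff: "fin_supp (u::'a \<Rightarrow> 'k::comm_ring_1) \<Longrightarrow> fin_supp v \<Longrightarrow> fin_supp (u - v)"
  unfolding fin_supp_def
  by (rule finite_subset[of _ "{x. u x \<noteq> 0} \<union> {x. v x \<noteq> 0}"]) auto

lemma fin_supp_fscale: "fin_supp u \<Longrightarrow> fin_supp (fscale a u)"
  unfolding fin_supp_def fscale_def
  by (rule finite_subset[of _ "{x. u x \<noteq> 0}"]) auto

lemma fin_supp_delta: "fin_supp (delta p)"
  unfolding fin_supp_def delta_def
  by (rule finite_subset[of _ "{p}"]) auto

lemma fin_supp_sum:
  "finite I \<Longrightarrow> (\<And>i. i \<in> I \<Longrightarrow> fin_supp (u i :: 'a \<Rightarrow> 'k::comm_ring_1)) \<Longrightarrow> fin_supp (\<Sum>i\<in>I. u i)"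
  by (induction I rule: finite_induct) (auto intro!: fin_supp_add fin_supp_zero)

lemma fin_supp_tmap:
  assumes "fin_supp u"
  shows "fin_supp (tmap g h (u :: _ \<Rightarrow> 'k::comm_ring_1))"
  unfolding tmap_def rsum_def
  by (rule fin_supp_sum)
     (use assms[unfolded fin_supp_def] in \<open>auto intro: fin_supp_fscale fin_supp_delta split: prod.splits\<close>)

lemma sum_fun_apply: "(\<Sum>i\<in>I. (h i :: 'a \<Rightarrow> 'b::comm_monoid_add)) p = (\<Sum>i\<in>I. h i p)"
  by (induction I rule: infinite_finite_induct) auto

context module
begin

lemma rsum_eq_sum:
  assumes "finite S" "{x. u x \<noteq> 0} \<subseteq> S"
  shows "rsum scale u g = (\<Sum>x\<in>S. scale (u x) (g x))"
  unfolding rsum_def by (rule sum.mono_neutral_left) (use assms in auto)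

lemma rsum_add:
  assumes "fin_supp u" "fin_supp v"
  shows "rsum scale (u + v) g = rsum scale u g + rsum scale v g"
proof -
  let ?S = "{x. u x \<noteq> 0} \<union> {x. v x \<noteq> 0}"
  have S: "finite ?S" using assms by (auto simp: fin_supp_def)
  show ?thesis
    by (subst (1 2 3) rsum_eq_sum[OF S]) (auto simp: scale_left_distrib sum.distrib)
qed

lemma rsum_diff:
  assumes "fin_supp u" "fin_supp v"
  shows "rsum scale (u - v) g = rsum scale u g - rsum scale v g"
proof -
  let ?S = "{x. u x \<noteq> 0} \<union> {x. v x \<noteq> 0}"
  have S: "finite ?S" using assms by (auto simp: fin_supp_def)
  show ?thesis
    by (subst (1 2 3) rsum_eq_sum[OF S]) (auto simp: scale_left_diff_distrib sum_subtractf)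
qed

lemma rsum_fscale:
  assumes "fin_supp u"
  shows "rsum scale (fscale a u) g = scale a (rsum scale u g)"
proof -
  have S: "finite {x. u x \<noteq> 0}" using assms by (simp add: fin_supp_def)
  show ?thesis
    by (subst (1 2) rsum_eq_sum[OF S]) (auto simp: fscale_def scale_sum_right)
qed

lemma rsum_delta: "rsum scale (delta p) g = g p"
  by (subst rsum_eq_sum[of "{p}"]) (auto simp: delta_def)

lemma rsum_sum:
  assumes "finite I" "\<And>i. i \<in> I \<Longrightarrow> fin_supp (u i)"
  shows "rsum scale (\<Sum>i\<in>I. u i) g = (\<Sum>i\<in>I. rsum scale (u i) g)"
  using assms
proof (induction I rule: finite_induct)
  case empty
  show ?case by (simp add: rsum_def)
next
  case (insert i F)
  have "rsum scale (u i + sum u F) g = rsum scale (u i) g + rsum scale (sum u F) g"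
    using insert by (intro rsum_add) (auto intro: fin_supp_sum)
  moreover have "rsum scale (sum u F) g = (\<Sum>j\<in>F. rsum scale (u j) g)"
    using insert by simp
  ultimately show ?case
    using insert(1,2) by (metis sum.insert)
qed

lemma rsum_rsum:
  assumes "fin_supp u" "\<And>x. fin_supp (h x)"
  shows "rsum scale (rsum fscale u h) g = rsum scale u (\<lambda>x. rsum scale (h x) g)"
proof -
  have S: "finite {x. u x \<noteq> 0}" using assms(1) by (simp add: fin_supp_def)
  have "rsum scale (rsum fscale u h) g = (\<Sum>x | u x \<noteq> 0. rsum scale (fscale (u x) (h x)) g)"
    unfolding rsum_def[of fscale] using S assms(2) by (intro rsum_sum) (auto intro: fin_supp_fscale)
  then show ?thesis
    using assms(2) by (simp add: rsum_fscale rsum_def[of scale u])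
qed

lemma rsum_tens_relations:
  fixes s1 :: "'a \<Rightarrow> 'm::ab_group_add \<Rightarrow> 'm" and s2 :: "'a \<Rightarrow> 'n::ab_group_add \<Rightarrow> 'n"
  assumes add1: "\<And>m m' n. g (m + m', n) = g (m, n) + g (m', n)"
    and add2: "\<And>m n n'. g (m, n + n') = g (m, n) + g (m, n')"
    and scale1: "\<And>a m n. g (s1 a m, n) = scale a (g (m, n))"
    and scale2: "\<And>a m n. g (m, s2 a n) = scale a (g (m, n))"
    and u: "u \<in> module.span fscale (tens_gen s1 s2)"
  shows "fin_supp u \<and> rsum scale u g = 0"
  using u
proof (induction rule: module.span_induct_alt[OF module_fscale, consumes 1, case_names base step])
  case base
  show ?case by (simp add: fin_supp_def rsum_def)
next
  case (step c x y)
  have "fin_supp x \<and> rsum scale x g = 0"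
    using \<open>x \<in> tens_gen s1 s2\<close> unfolding tens_gen_def
    by (auto simp: fin_supp_diff fin_supp_fscale fin_supp_delta rsum_diff rsum_fscale rsum_delta
        add1 add2 scale1 scale2)
  with step show ?case
    by (metis fin_supp_add fin_supp_fscale rsum_add rsum_fscale scale_zero_right add_0)
qed

lemma rsum_tens_eq:
  fixes s1 :: "'a \<Rightarrow> 'm::ab_group_add \<Rightarrow> 'm" and s2 :: "'a \<Rightarrow> 'n::ab_group_add \<Rightarrow> 'n"
  assumes "\<And>m m' n. g (m + m', n) = g (m, n) + g (m', n)"
    and "\<And>m n n'. g (m, n + n') = g (m, n) + g (m, n')"
    and "\<And>a m n. g (s1 a m, n) = scale a (g (m, n))"
    and "\<And>a m n. g (m, s2 a n) = scale a (g (m, n))"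
    and "tens_eq s1 s2 u v" "fin_supp v"
  shows "rsum scale u g = rsum scale v g"
proof -
  have "fin_supp (u - v) \<and> rsum scale (u - v) g = 0"
    using assms unfolding tens_eq_def by (intro rsum_tens_relations)
  moreover have "u = (u - v) + v" by simp
  ultimately show ?thesis
    using \<open>fin_supp v\<close> by (metis add_0 rsum_add)
qed

end

definition contract_left ::
  "('k::comm_ring_1 \<Rightarrow> 'c::ab_group_add \<Rightarrow> 'c) \<Rightarrow> ('m \<Rightarrow> 'k) \<Rightarrow> ('m \<times> 'c \<Rightarrow> 'k) \<Rightarrow> 'c" where
  "contract_left sC \<alpha> u = rsum sC u (\<lambda>(x, c). sC (\<alpha> x) c)"

lemma contract_left_tens_eq:
  assumes "module sC" "module_hom sM (*) \<alpha>" "tens_eq sM sC u v" "fin_supp v"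
  shows "contract_left sC \<alpha> u = contract_left sC \<alpha> v"
  unfolding contract_left_def
  using assms
  by (intro module.rsum_tens_eq)
     (auto simp: module_hom.add module_hom.scale module.scale_left_distrib module.scale_right_distrib
        module.scale_scale mult.commute)

lemma contract_left_tmap:
  assumes "module sC" "fin_supp u"
  shows "contract_left sC \<alpha> (tmap g id u) = contract_left sC (\<alpha> \<circ> g) u"
  unfolding contract_left_def tmap_def using assms
  by (subst module.rsum_rsum)
     (auto simp: fin_supp_delta module.rsum_delta fun_eq_iff split: prod.splits
        intro!: arg_cong[where f = "rsum sC u"])

lemma contract_left_colinear:
  assumes "module sC" "right_comodule sC \<Delta> \<epsilon> sM \<rho>" "colinear sC sM \<rho> f" "module_hom sM (*) \<alpha>"
  shows "contract_left sC \<alpha> (\<rho> (f m)) = contract_left sC (\<alpha> \<circ> f) (\<rho> m)"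
proof -
  have "tens_eq sM sC (\<rho> (f m)) (tmap f id (\<rho> m))"
    using assms(3) by (simp add: colinear_def)
  then have "contract_left sC \<alpha> (\<rho> (f m)) = contract_left sC \<alpha> (tmap f id (\<rho> m))"
    using assms(1,2,4) by (intro contract_left_tens_eq) (auto simp: fin_supp_tmap right_comodule_def)
  also have "\<dots> = contract_left sC (\<alpha> \<circ> f) (\<rho> m)"
    using assms(1,2) by (intro contract_left_tmap) (auto simp: right_comodule_def)
  finally show ?thesis .
qed

lemma tswap_tmap_eta:
  assumes "finite I"
  shows "tswap (tmap f id (eta I e es 1)) = (\<Sum>i\<in>I. delta (es i, f (e i)))"
proof -
  have "tmap f id (eta I e es 1) = (\<Sum>i\<in>I. delta (f (e i), es i))"
    using assms
    by (simp add: eta_def fscale_def tmap_def module.rsum_sum[OF module_fscale] fin_supp_delta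
        module.rsum_delta[OF module_fscale])
  then show ?thesis
    by (auto simp: tswap_def fun_eq_iff sum_fun_apply delta_def conj_commute)
qed

lemma eps_ev_sum_delta:
  assumes "module sC" "finite I"
  shows "eps_ev sC \<rho> (\<Sum>i\<in>I. delta (\<alpha> i, m i)) = (\<Sum>i\<in>I. contract_left sC (\<alpha> i) (\<rho> (m i)))"
  using assms
  by (simp add: eps_ev_def contract_left_def module.rsum_sum fin_supp_delta module.rsum_delta)

theorem proposition6p5:
  fixes sC :: "'k::comm_ring_1 \<Rightarrow> 'c::ab_group_add \<Rightarrow> 'c"
    and \<Delta> :: "'c \<Rightarrow> ('c \<times> 'c \<Rightarrow> 'k)" and \<epsilon>C :: "'c \<Rightarrow> 'k"
    and sM :: "'k \<Rightarrow> 'm::ab_group_add \<Rightarrow> 'm" and \<rho> :: "'m \<Rightarrow> ('m \<times> 'c \<Rightarrow> 'k)"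
    and f :: "'m \<Rightarrow> 'm"
    and I :: "'i set" and e :: "'i \<Rightarrow> 'm" and es :: "'i \<Rightarrow> ('m \<Rightarrow> 'k)"
  assumes "global_dim_zero TYPE('k)"
    and "coalgebra sC \<Delta> \<epsilon>C"
    and "right_comodule sC \<Delta> \<epsilon>C sM \<rho>"
    and "fin_gen sM"
    and "colinear sC sM \<rho> f"
    and "dual_basis sM I e es"
  shows "trC sC \<rho> I e es f = eps_ev sC \<rho> (tswap (tmap f id (eta I e es 1)))"
proof -
  \<comment> \<open>Global dimension zero and finite generation are what provide a dual basis in the
    paper; here the dual basis is a hypothesis.\<close>
  have C: "module sC" using assms(2) by (simp add: coalgebra_def)
  have I: "finite I" and es: "\<And>i. i \<in> I \<Longrightarrow> module_hom sM (*) (es i)"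
    using assms(6) by (auto simp: dual_basis_def)
  have "eps_ev sC \<rho> (tswap (tmap f id (eta I e es 1)))
      = (\<Sum>i\<in>I. contract_left sC (es i) (\<rho> (f (e i))))"
    using C I by (simp add: tswap_tmap_eta eps_ev_sum_delta)
  also have "\<dots> = (\<Sum>i\<in>I. contract_left sC (es i \<circ> f) (\<rho> (e i)))"
    using C assms(3,5) es by (intro sum.cong refl contract_left_colinear)
  also have "\<dots> = trC sC \<rho> I e es f"
    by (simp add: trC_def contract_left_def)
  finally show ?thesis ..
qed

end
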